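(* Let $\{Q_\theta,\ \theta\in I\}$ be a natural exponential family as in the context and let $\overline\Theta$ be a class of functions from a set ${\mathscr W}$ to $I$ which is VC-subgraph with dimension not larger than $V\ge1$. Then the class of functions $\{(w,y)\mapsto q_{\theta(w)}(y):\ \theta\in\overline\Theta\}$ on ${\mathscr W}\times\mathscr Y$ is VC-subgraph with dimension not larger than $9.41V$.
   Context: $\nu$ is a $\sigma$-finite measure on $(\mathscr Y,\mathcal Y)$, $S:\mathscr Y\to\mathbb R$ measurable and not $\nu$-a.e. constant, $I$ an interval with nonempty interior on which $A(\theta)=\log\int e^{\theta S(y)}d\nu(y)$ is finite, and $q_\theta(y)=e^{S(y)\theta-A(\theta)}$. A class of real functions on a set $E$ is VC-subgraph with dimension not larger than $V$ if its subgraphs $\{(x,t)\in E\times\mathbb R: f(x)>t\}$ shatter no subset of $E\times\mathbb R$ of cardinality larger than $V$. *)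

theory Defs
  imports "HOL-Analysis.Analysis"
begin

definition subgraph :: "'a set \<Rightarrow> ('a \<Rightarrow> real) \<Rightarrow> ('a \<times> real) set" where
  "subgraph E f = {(x, t). x \<in> E \<and> f x > t}"

definition subgraphs_shatter :: "'a set \<Rightarrow> ('a \<Rightarrow> real) set \<Rightarrow> ('a \<times> real) set \<Rightarrow> bool" where
  "subgraphs_shatter E F C \<longleftrightarrow> (\<forall>D \<subseteq> C. \<exists>f\<in>F. subgraph E f \<inter> C = D)"

definition vc_subgraph_le :: "'a set \<Rightarrow> ('a \<Rightarrow> real) set \<Rightarrow> real \<Rightarrow> bool" where
  "vc_subgraph_le E F V \<longleftrightarrow>
     (\<forall>C \<subseteq> E \<times> UNIV. subgraphs_shatter E F C \<longrightarrow> finite C \<and> real (card C) \<le> V)"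

definition logpart :: "'y measure \<Rightarrow> ('y \<Rightarrow> real) \<Rightarrow> real \<Rightarrow> real" where
  "logpart \<nu> S \<theta> = ln (enn2real (\<integral>\<^sup>+ y. ennreal (exp (\<theta> * S y)) \<partial>\<nu>))"

definition nef_density :: "'y measure \<Rightarrow> ('y \<Rightarrow> real) \<Rightarrow> real \<Rightarrow> 'y \<Rightarrow> real" where
  "nef_density \<nu> S \<theta> y = exp (S y * \<theta> - logpart \<nu> S \<theta>)"

end

theory Submission
  imports Defs
begin

(* A point ((w, y), t) lies in the subgraph of (w, y) |-> q_(\<theta> w)(y) iff \<theta> w lies in
   J = {s \<in> I. t < q_s(y)}. This J is an interval: for t > 0 it is a strict sublevel set of the
   convex function s |-> \<integral> exp (s (S z - S y)) d\<nu>(z). On finitely many parameter values J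
   agrees with a half-open interval (a, b], and \<theta> w \<in> (a, b] iff (w, a) lies in the subgraph
   of \<theta> and (w, b) does not. So a set C shattered by the composed class yields 2^|C| distinct
   traces of subgraphs of \<Theta> on at most 2|C| points, while Pajor's lemma (hence Sauer-Shelah)
   allows at most sum_(k<=V) (2|C| choose k) <= (2e|C|/V)^V of them, which is less than 2^|C|
   once |C| >= 9V. *)

section \<open>Shattered sets and the Sauer-Shelah bound\<close>

definition shatters :: "'a set set \<Rightarrow> 'a set \<Rightarrow> bool" where
  "shatters F S \<longleftrightarrow> (\<forall>D\<subseteq>S. \<exists>A\<in>F. A \<inter> S = D)"

lemma shatters_image_Diff_singleton:
  assumes "x \<notin> S" "shatters ((\<lambda>A. A - {x}) ` F) S"
  shows "shatters F S"
  unfolding shatters_def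
proof (intro allI impI)
  fix D assume "D \<subseteq> S"
  then obtain A where "A \<in> F" "(A - {x}) \<inter> S = D"
    using assms(2) unfolding shatters_def by blast
  moreover have "(A - {x}) \<inter> S = A \<inter> S" using assms(1) by blast
  ultimately show "\<exists>A\<in>F. A \<inter> S = D" by auto
qed

lemma shatters_insert:
  assumes "x \<notin> S" "shatters {B\<in>F. x \<notin> B \<and> insert x B \<in> F} S"
  shows "shatters F (insert x S)"
  unfolding shatters_def
proof (intro allI impI)
  fix D assume D: "D \<subseteq> insert x S"
  then have "D - {x} \<subseteq> S" by blast
  then obtain B where B: "B \<in> F" "x \<notin> B" "insert x B \<in> F" "B \<inter> S = D - {x}"
    using assms(2) unfolding shatters_def by blast
  show "\<exists>A\<in>F. A \<inter> insert x S = D"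
  proof (cases "x \<in> D")
    case True
    then have "insert x B \<inter> insert x S = D" using B(4) D by blast
    then show ?thesis using B(3) by blast
  next
    case False
    then have "B \<inter> insert x S = D" using B(2,4) D by blast
    then show ?thesis using B(1) by blast
  qed
qed

(* A |-> A - {x} is injective on F except that it merges the pairs B, insert x B in F;
   the second summand counts these pairs. *)
lemma card_le_card_image_Diff_singleton_plus:
  assumes "finite F"
  shows "card F \<le> card ((\<lambda>A. A - {x}) ` F) + card {B\<in>F. x \<notin> B \<and> insert x B \<in> F}"
proof -
  define Fout where "Fout = {A\<in>F. x \<notin> A}"
  define Fin where "Fin = (\<lambda>A. A - {x}) ` {A\<in>F. x \<in> A}"
  have "inj_on (\<lambda>A. A - {x}) {A\<in>F. x \<in> A}"
    by (rule inj_onI) (metis (no_types, lifting) insert_Diff mem_Collect_eq)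
  then have "card Fin = card {A\<in>F. x \<in> A}" unfolding Fin_def by (rule card_image)
  moreover have "card F = card Fout + card {A\<in>F. x \<in> A}"
    using card_Int_Diff[OF assms, of "{A. x \<notin> A}"] unfolding Fout_def by (simp add: Int_def set_diff_eq)
  ultimately have "card F = card Fout + card Fin" by simp
  also have "\<dots> = card (Fout \<union> Fin) + card (Fout \<inter> Fin)"
    by (rule card_Un_Int) (use assms in \<open>simp_all add: Fout_def Fin_def\<close>)
  also have "Fout \<union> Fin = (\<lambda>A. A - {x}) ` F"
  proof
    show "(\<lambda>A. A - {x}) ` F \<subseteq> Fout \<union> Fin"
    proof
      fix B assume "B \<in> (\<lambda>A. A - {x}) ` F"
      then obtain A where "A \<in> F" "B = A - {x}" by blast
      then show "B \<in> Fout \<union> Fin" by (cases "x \<in> A") (auto simp: Fout_def Fin_def)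
    qed
  qed (auto simp: Fout_def Fin_def intro: rev_image_eqI)
  also have "Fout \<inter> Fin = {B\<in>F. x \<notin> B \<and> insert x B \<in> F}"
  proof (intro equalityI subsetI)
    fix B assume "B \<in> {B\<in>F. x \<notin> B \<and> insert x B \<in> F}"
    then show "B \<in> Fout \<inter> Fin"
      by (auto simp: Fout_def Fin_def intro!: image_eqI[where x = "insert x B"])
  qed (auto simp: Fout_def Fin_def insert_absorb)
  finally show ?thesis by simp
qed

theorem card_le_card_shattered_subsets:
  assumes "finite P" "F \<subseteq> Pow P"
  shows "card F \<le> card {S. S \<subseteq> P \<and> shatters F S}"
  using assms
proof (induction P arbitrary: F rule: finite_induct)
  case empty
  then have "F = {} \<or> F = {{}}" by (simp add: subset_singleton_iff)
  then show ?case
  proof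
    assume "F = {{}}"
    then have "{S. S \<subseteq> {} \<and> shatters F S} = {{}}" by (auto simp: shatters_def)
    then show ?case using \<open>F = {{}}\<close> by simp
  qed simp
next
  case (insert x P)
  let ?F0 = "(\<lambda>A. A - {x}) ` F" and ?F1 = "{B\<in>F. x \<notin> B \<and> insert x B \<in> F}"
  let ?Sh = "\<lambda>G. {S. S \<subseteq> P \<and> shatters G S}"
  have "finite F"
    using insert.prems insert.hyps(1) by (meson finite_Pow_iff finite_insert rev_finite_subset)
  have "?F0 \<subseteq> Pow P" "?F1 \<subseteq> Pow P" using insert.prems by auto
  have "card F \<le> card ?F0 + card ?F1"
    using \<open>finite F\<close> by (rule card_le_card_image_Diff_singleton_plus)
  also have "\<dots> \<le> card (?Sh ?F0) + card (?Sh ?F1)"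
    using insert.IH[OF \<open>?F0 \<subseteq> Pow P\<close>] insert.IH[OF \<open>?F1 \<subseteq> Pow P\<close>] by (rule add_mono)
  also have "\<dots> = card (?Sh ?F0 \<union> insert x ` ?Sh ?F1)"
  proof -
    have "inj_on (insert x) (?Sh ?F1)"
      using insert.hyps(2) by (auto simp: inj_on_def)
    then show ?thesis
      using insert.hyps by (subst card_Un_disjoint) (auto simp: card_image)
  qed
  also have "\<dots> \<le> card {S. S \<subseteq> insert x P \<and> shatters F S}"
  proof (rule card_mono)
    have "shatters F S" if "S \<in> ?Sh ?F0" for S
      using that insert.hyps(2) by (blast intro: shatters_image_Diff_singleton)
    moreover have "shatters F (insert x S)" if "S \<in> ?Sh ?F1" for S
      using that insert.hyps(2) by (blast intro: shatters_insert)
    ultimately show "?Sh ?F0 \<union> insert x ` ?Sh ?F1 \<subseteq> {S. S \<subseteq> insert x P \<and> shatters F S}"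
      by blast
  qed (use insert.hyps(1) in simp)
  finally show ?case .
qed

lemma card_subsets_card_le:
  assumes "finite P"
  shows "card {S. S \<subseteq> P \<and> card S \<le> V} \<le> (\<Sum>k\<le>V. card P choose k)"
proof -
  have "{S. S \<subseteq> P \<and> card S \<le> V} = (\<Union>k\<le>V. {S. S \<subseteq> P \<and> card S = k})" by auto
  then have "card {S. S \<subseteq> P \<and> card S \<le> V} \<le> (\<Sum>k\<le>V. card {S. S \<subseteq> P \<and> card S = k})"
    by (simp add: card_UN_le)
  also have "\<dots> = (\<Sum>k\<le>V. card P choose k)" using n_subsets[OF assms] by simp
  finally show ?thesis .
qed

theorem card_subgraph_traces_le:
  assumes "vc_subgraph_le W \<Theta> (real V)" "finite P" "P \<subseteq> W \<times> UNIV"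
  shows "card ((\<lambda>\<theta>. subgraph W \<theta> \<inter> P) ` \<Theta>) \<le> (\<Sum>k\<le>V. card P choose k)"
proof -
  let ?F = "(\<lambda>\<theta>. subgraph W \<theta> \<inter> P) ` \<Theta>"
  have "subgraphs_shatter W \<Theta> S" if "S \<subseteq> P" "shatters ?F S" for S
    using that unfolding shatters_def subgraphs_shatter_def by (simp add: Int_assoc Int_absorb1)
  then have "{S. S \<subseteq> P \<and> shatters ?F S} \<subseteq> {S. S \<subseteq> P \<and> card S \<le> V}"
    using assms(1,3) unfolding vc_subgraph_le_def by force
  then have "card {S. S \<subseteq> P \<and> shatters ?F S} \<le> card {S. S \<subseteq> P \<and> card S \<le> V}"
    by (rule card_mono[rotated]) (use assms(2) in simp)
  moreover have "card ?F \<le> card {S. S \<subseteq> P \<and> shatters ?F S}"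
    using assms(2) by (rule card_le_card_shattered_subsets) blast
  ultimately show ?thesis using card_subsets_card_le[OF assms(2), of V] by linarith
qed

lemma subgraphs_shatter_subset:
  assumes "subgraphs_shatter E F C" "B \<subseteq> C"
  shows "subgraphs_shatter E F B"
  unfolding subgraphs_shatter_def
proof (intro allI impI)
  fix D assume "D \<subseteq> B"
  then obtain f where "f \<in> F" "subgraph E f \<inter> C = D"
    using assms unfolding subgraphs_shatter_def by blast
  moreover have "subgraph E f \<inter> B = D" if "subgraph E f \<inter> C = D" for f
    using that \<open>D \<subseteq> B\<close> assms(2) by blast
  ultimately show "\<exists>f\<in>F. subgraph E f \<inter> B = D" by blast
qed

lemma vc_subgraph_leI:
  assumes "\<And>C. C \<subseteq> E \<times> UNIV \<Longrightarrow> finite C \<Longrightarrow> subgraphs_shatter E F C \<Longrightarrow> card C \<le> n"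
  shows "vc_subgraph_le E F (real n)"
  unfolding vc_subgraph_le_def
proof (intro allI impI)
  fix C assume C: "C \<subseteq> E \<times> UNIV" "subgraphs_shatter E F C"
  have "finite C"
  proof (rule ccontr)
    assume "infinite C"
    then obtain B where B: "finite B" "card B = Suc n" "B \<subseteq> C"
      using infinite_arbitrarily_large by blast
    have sub: "B \<subseteq> E \<times> UNIV" using B(3) C(1) by (rule order_trans)
    have sh: "subgraphs_shatter E F B" using C(2) B(3) by (rule subgraphs_shatter_subset)
    have "card B \<le> n" by (rule assms[OF sub B(1) sh])
    then show False using B(2) by simp
  qed
  then show "finite C \<and> real (card C) \<le> real n" using assms C by simp
qed

lemma vc_subgraph_le_mono:
  assumes "vc_subgraph_le E F a" "a \<le> b"
  shows "vc_subgraph_le E F b"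
  using assms unfolding vc_subgraph_le_def by (meson order.trans)

section \<open>Binomial estimates\<close>

lemma sum_binomial_le_exp_power:
  assumes "1 \<le> V" "V \<le> m"
  shows "real (\<Sum>k\<le>V. m choose k) \<le> (exp 1 * real m / real V) ^ V"
proof -
  define p where "p = real V / real m"
  have p: "0 < p" "p \<le> 1" using assms by (auto simp: p_def)
  have "real (\<Sum>k\<le>V. m choose k) * p ^ V = (\<Sum>k\<le>V. real (m choose k) * p ^ V)"
    by (simp add: sum_distrib_right)
  also have "\<dots> \<le> (\<Sum>k\<le>V. real (m choose k) * p ^ k)"
    by (rule sum_mono) (use p in \<open>auto intro!: mult_left_mono power_decreasing\<close>)
  also have "\<dots> \<le> (\<Sum>k\<le>m. real (m choose k) * p ^ k)"
    by (rule sum_mono2) (use assms p in auto)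
  also have "\<dots> = (p + 1) ^ m" by (simp add: binomial_ring)
  also have "\<dots> \<le> exp p ^ m"
    by (rule power_mono) (use p in \<open>auto simp: add.commute\<close>)
  also have "\<dots> = exp 1 ^ V" using assms
    by (simp add: p_def flip: exp_of_nat_mult)
  finally have "real (\<Sum>k\<le>V. m choose k) \<le> exp 1 ^ V / p ^ V"
    using p by (simp add: pos_le_divide_eq)
  also have "\<dots> = (exp 1 * real m / real V) ^ V"
    by (simp add: p_def power_divide field_simps)
  finally show ?thesis .
qed

lemma two_exp_mult_less_two_powr:
  assumes "(x::real) \<ge> 9"
  shows "2 * exp 1 * x < 2 powr x"
proof -
  define k where "k = nat \<lfloor>x\<rfloor>"
  have "k \<ge> 9" using assms by (simp add: k_def le_nat_floor)
  have kx: "real k \<le> x" "x < real k + 1" using assms by (auto simp: k_def)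
  have "6 * (real k + 1) \<le> 2 ^ k"
    using \<open>k \<ge> 9\<close> by (induction k rule: dec_induct) simp_all
  have "2 * exp 1 * x \<le> 6 * x" using exp_le assms by simp
  also have "\<dots> < 6 * (real k + 1)" using kx by simp
  also have "\<dots> \<le> 2 ^ k" by fact
  also have "\<dots> = 2 powr real k" by (simp add: powr_realpow)
  also have "\<dots> \<le> 2 powr x" using kx by simp
  finally show ?thesis .
qed

lemma sum_binomial_double_less_two_power:
  assumes "1 \<le> V" "9 * V \<le> n"
  shows "(\<Sum>k\<le>V. (2 * n) choose k) < 2 ^ n"
proof -
  define x where "x = real n / real V"
  have "x \<ge> 9" using assms by (simp add: x_def field_simps)
  have "real (\<Sum>k\<le>V. (2 * n) choose k) \<le> (exp 1 * real (2 * n) / real V) ^ V"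
    by (rule sum_binomial_le_exp_power) (use assms in simp_all)
  also have "\<dots> = (2 * exp 1 * x) ^ V" by (simp add: x_def mult.commute mult.left_commute)
  also have "\<dots> < (2 powr x) ^ V"
    by (rule power_strict_mono) (use two_exp_mult_less_two_powr[OF \<open>x \<ge> 9\<close>] \<open>x \<ge> 9\<close> assms in auto)
  also have "\<dots> = 2 powr (x * real V)" by (simp add: powr_powr flip: powr_realpow)
  also have "\<dots> = 2 ^ n" using assms by (simp add: x_def powr_realpow)
  finally show ?thesis by (metis of_nat_less_imp_less of_nat_numeral of_nat_power)
qed

section \<open>Interval compositions of VC-subgraph classes\<close>

lemma finite_Int_interval_eq_Int_Ioc:
  fixes X J :: "real set"
  assumes "finite X" "is_interval J"
  shows "\<exists>a b. X \<inter> J = X \<inter> {a<..b}"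
proof (cases "X \<inter> J = {}")
  case True
  then show ?thesis by (intro exI[of _ 0]) auto
next
  case False
  have fin: "finite (X \<inter> J)" using assms(1) by simp
  obtain m M where mM: "m \<in> X \<inter> J" "M \<in> X \<inter> J" "\<And>x. x \<in> X \<inter> J \<Longrightarrow> m \<le> x \<and> x \<le> M"
    using Min_in[OF fin False] Max_in[OF fin False] Min_le[OF fin] Max_ge[OF fin] by metis
  define a where "a = Max (insert (m - 1) {x\<in>X. x < m})"
  have "finite {x\<in>X. x < m}" using assms(1) by simp
  then have a: "a < m" "\<And>x. x \<in> X \<Longrightarrow> x < m \<Longrightarrow> x \<le> a" by (auto simp: a_def)
  have "X \<inter> J = X \<inter> {a<..M}"
  proof (intro equalityI subsetI)
    fix x assume "x \<in> X \<inter> J"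
    then show "x \<in> X \<inter> {a<..M}" using mM(3) a(1) by fastforce
  next
    fix x assume x: "x \<in> X \<inter> {a<..M}"
    then have "m \<le> x" using a(2) by force
    then have "x \<in> J" using mem_is_interval_1_I[OF assms(2), of m M x] mM(1,2) x by simp
    then show "x \<in> X \<inter> J" using x by simp
  qed
  then show ?thesis by blast
qed

lemma finite_Int_intervals_eq_Int_Ioc:
  fixes X :: "real set" and J :: "'c \<Rightarrow> real set"
  assumes "finite X" "\<And>c. c \<in> C \<Longrightarrow> is_interval (J c)"
  obtains a b where "\<And>c. c \<in> C \<Longrightarrow> X \<inter> J c = X \<inter> {a c<..b c}"
proof -
  have "\<forall>c\<in>C. \<exists>a b. X \<inter> J c = X \<inter> {a<..b}"
    using finite_Int_interval_eq_Int_Ioc[OF assms(1)] assms(2) by blast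
  then show ?thesis using that by metis
qed

lemma ex_two_power_card_le_card_subgraph_traces:
  fixes C :: "'c set" and w :: "'c \<Rightarrow> 'w" and J :: "'c \<Rightarrow> real set"
  assumes "finite C" "w ` C \<subseteq> W" "\<And>c. c \<in> C \<Longrightarrow> is_interval (J c)"
    and shattered: "\<And>D. D \<subseteq> C \<Longrightarrow> \<exists>\<theta>\<in>\<Theta>. \<forall>c\<in>C. c \<in> D \<longleftrightarrow> \<theta> (w c) \<in> J c"
  shows "\<exists>P. finite P \<and> P \<subseteq> W \<times> UNIV \<and> card P \<le> 2 * card C
    \<and> 2 ^ card C \<le> card ((\<lambda>\<theta>. subgraph W \<theta> \<inter> P) ` \<Theta>)"
proof -
  obtain th where th: "\<And>D. D \<subseteq> C \<Longrightarrow> th D \<in> \<Theta> \<and> (\<forall>c\<in>C. c \<in> D \<longleftrightarrow> th D (w c) \<in> J c)"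
    using shattered by metis
  define X where "X = (\<lambda>(D, c). th D (w c)) ` (Pow C \<times> C)"
  have "finite X" using \<open>finite C\<close> by (simp add: X_def)
  then obtain a b where ab: "\<And>c. c \<in> C \<Longrightarrow> X \<inter> J c = X \<inter> {a c<..b c}"
    using finite_Int_intervals_eq_Int_Ioc assms(3) by blast
  define P where "P = (\<lambda>c. (w c, a c)) ` C \<union> (\<lambda>c. (w c, b c)) ` C"
  define decode where "decode A = {c\<in>C. (w c, a c) \<in> A \<and> (w c, b c) \<notin> A}" for A
  have decode: "decode (subgraph W (th D) \<inter> P) = D" if "D \<subseteq> C" for D
  proof -
    have "th D (w c) \<in> J c \<longleftrightarrow> a c < th D (w c) \<and> th D (w c) \<le> b c" if "c \<in> C" for c
    proof -
      have "th D (w c) \<in> X" unfolding X_def using \<open>D \<subseteq> C\<close> that by force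
      then show ?thesis using ab[OF that] by (metis Int_iff greaterThanAtMost_iff)
    qed
    then show ?thesis
      using th[OF that] that assms(2) by (auto simp: decode_def subgraph_def P_def not_less)
  qed
  have "Pow C \<subseteq> decode ` (\<lambda>\<theta>. subgraph W \<theta> \<inter> P) ` \<Theta>"
  proof
    fix D assume "D \<in> Pow C"
    then have "D = decode (subgraph W (th D) \<inter> P)" "th D \<in> \<Theta>" using decode th by auto
    then show "D \<in> decode ` (\<lambda>\<theta>. subgraph W \<theta> \<inter> P) ` \<Theta>" by blast
  qed
  moreover have "finite P" using \<open>finite C\<close> by (simp add: P_def)
  ultimately have "card (Pow C) \<le> card ((\<lambda>\<theta>. subgraph W \<theta> \<inter> P) ` \<Theta>)"
    by (intro surj_card_le[rotated]) (auto intro: finite_subset)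
  moreover have "card P \<le> 2 * card C"
    unfolding P_def mult_2 using card_Un_le card_image_le[OF \<open>finite C\<close>] by (meson add_mono order_trans)
  moreover have "P \<subseteq> W \<times> UNIV" using assms(2) by (auto simp: P_def)
  ultimately show ?thesis using \<open>finite P\<close> \<open>finite C\<close> by (auto simp: card_Pow)
qed

theorem two_power_card_le_sum_binomial:
  fixes C :: "'c set" and w :: "'c \<Rightarrow> 'w" and J :: "'c \<Rightarrow> real set"
  assumes "vc_subgraph_le W \<Theta> (real V)"
    and "finite C" "w ` C \<subseteq> W" "\<And>c. c \<in> C \<Longrightarrow> is_interval (J c)"
    and "\<And>D. D \<subseteq> C \<Longrightarrow> \<exists>\<theta>\<in>\<Theta>. \<forall>c\<in>C. c \<in> D \<longleftrightarrow> \<theta> (w c) \<in> J c"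
  shows "2 ^ card C \<le> (\<Sum>k\<le>V. (2 * card C) choose k)"
proof -
  obtain P where P: "finite P" "P \<subseteq> W \<times> UNIV" "card P \<le> 2 * card C"
    and traces: "2 ^ card C \<le> card ((\<lambda>\<theta>. subgraph W \<theta> \<inter> P) ` \<Theta>)"
    using ex_two_power_card_le_card_subgraph_traces[OF assms(2-5)] by blast
  note traces
  also have "card ((\<lambda>\<theta>. subgraph W \<theta> \<inter> P) ` \<Theta>) \<le> (\<Sum>k\<le>V. card P choose k)"
    using assms(1) P(1,2) by (rule card_subgraph_traces_le)
  also have "\<dots> \<le> (\<Sum>k\<le>V. (2 * card C) choose k)"
    by (intro sum_mono binomial_right_mono P(3))
  finally show ?thesis .
qed

lemma subgraphs_shatter_composeD:
  assumes "subgraphs_shatter (W \<times> Y) ((\<lambda>\<theta>. \<lambda>(w, y). g (\<theta> w) y) ` \<Theta>) C"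
    and "C \<subseteq> (W \<times> Y) \<times> UNIV" "\<forall>\<theta>\<in>\<Theta>. \<forall>w\<in>W. \<theta> w \<in> I" "D \<subseteq> C"
  shows "\<exists>\<theta>\<in>\<Theta>. \<forall>c\<in>C. c \<in> D \<longleftrightarrow> \<theta> (fst (fst c)) \<in> {s\<in>I. snd c < g s (snd (fst c))}"
proof -
  obtain \<theta> where "\<theta> \<in> \<Theta>" and \<theta>: "subgraph (W \<times> Y) (\<lambda>(w, y). g (\<theta> w) y) \<inter> C = D"
    using assms(1,4) unfolding subgraphs_shatter_def by blast
  have "c \<in> D \<longleftrightarrow> \<theta> (fst (fst c)) \<in> {s\<in>I. snd c < g s (snd (fst c))}" if "c \<in> C" for c
  proof -
    obtain w y t where c: "c = ((w, y), t)" "w \<in> W" "y \<in> Y"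
      using \<open>c \<in> C\<close> assms(2) by auto
    have "c \<in> D \<longleftrightarrow> c \<in> subgraph (W \<times> Y) (\<lambda>(w, y). g (\<theta> w) y)" using \<theta> \<open>c \<in> C\<close> by blast
    also have "\<dots> \<longleftrightarrow> t < g (\<theta> w) y" using c by (simp add: subgraph_def)
    finally show ?thesis using c assms(3) \<open>\<theta> \<in> \<Theta>\<close> by simp
  qed
  then show ?thesis using \<open>\<theta> \<in> \<Theta>\<close> by blast
qed

section \<open>Superlevel sets of exponential family densities\<close>

lemma convex_strict_sublevel:
  assumes "convex_on A f"
  shows "convex {x\<in>A. f x < r}"
  unfolding convex_alt
proof (intro ballI allI impI)
  fix x y and u :: real
  assume xy: "x \<in> {x\<in>A. f x < r}" "y \<in> {x\<in>A. f x < r}" and u: "0 \<le> u \<and> u \<le> 1"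
  have "(1 - u) *\<^sub>R x + u *\<^sub>R y \<in> A"
    using convex_on_imp_convex[OF assms] xy u unfolding convex_alt by blast
  moreover have "f ((1 - u) *\<^sub>R x + u *\<^sub>R y) \<le> (1 - u) * f x + u * f y"
    using convex_onD[OF assms] xy u by simp
  moreover have "(1 - u) * f x + u * f y < r"
    using xy u by (simp add: convex_bound_lt)
  ultimately show "(1 - u) *\<^sub>R x + u *\<^sub>R y \<in> {x\<in>A. f x < r}" by simp
qed

lemma nn_integral_exp_shift:
  assumes [measurable]: "S \<in> borel_measurable \<nu>"
  shows "(\<integral>\<^sup>+ z. ennreal (exp (s * (S z - c))) \<partial>\<nu>)
       = (\<integral>\<^sup>+ z. ennreal (exp (s * S z)) \<partial>\<nu>) * ennreal (exp (- s * c))"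
proof -
  have "exp (s * (S z - c)) = exp (s * S z) * exp (- s * c)" for z
    by (simp add: algebra_simps flip: exp_add)
  then have "ennreal (exp (s * (S z - c))) = ennreal (exp (s * S z)) * ennreal (exp (- s * c))" for z
    by (simp add: ennreal_mult)
  then show ?thesis by (simp add: nn_integral_multc)
qed

lemma nn_integral_exp_convex:
  assumes [measurable]: "f \<in> borel_measurable \<nu>" and t: "0 \<le> t" "t \<le> 1"
  shows "(\<integral>\<^sup>+ z. ennreal (exp (((1 - t) * x + t * y) * f z)) \<partial>\<nu>)
     \<le> ennreal (1 - t) * (\<integral>\<^sup>+ z. ennreal (exp (x * f z)) \<partial>\<nu>)
       + ennreal t * (\<integral>\<^sup>+ z. ennreal (exp (y * f z)) \<partial>\<nu>)"
proof -
  have "ennreal (exp (((1 - t) * x + t * y) * f z))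
     \<le> ennreal (1 - t) * ennreal (exp (x * f z)) + ennreal t * ennreal (exp (y * f z))" for z
  proof -
    have "((1 - t) * x + t * y) * f z = (1 - t) * (x * f z) + t * (y * f z)"
      by (simp add: algebra_simps)
    then have "exp (((1 - t) * x + t * y) * f z) \<le> (1 - t) * exp (x * f z) + t * exp (y * f z)"
      using convex_onD[OF exp_convex, of t "x * f z" "y * f z"] t by simp
    then have "ennreal (exp (((1 - t) * x + t * y) * f z))
        \<le> ennreal ((1 - t) * exp (x * f z) + t * exp (y * f z))"
      by (rule ennreal_leI)
    also have "\<dots> = ennreal (1 - t) * ennreal (exp (x * f z)) + ennreal t * ennreal (exp (y * f z))"
      using t by (simp add: ennreal_plus ennreal_mult)
    finally show ?thesis .
  qed
  then have "(\<integral>\<^sup>+ z. ennreal (exp (((1 - t) * x + t * y) * f z)) \<partial>\<nu>)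
     \<le> (\<integral>\<^sup>+ z. ennreal (1 - t) * ennreal (exp (x * f z)) + ennreal t * ennreal (exp (y * f z)) \<partial>\<nu>)"
    by (rule nn_integral_mono)
  also have "\<dots> = ennreal (1 - t) * (\<integral>\<^sup>+ z. ennreal (exp (x * f z)) \<partial>\<nu>)
       + ennreal t * (\<integral>\<^sup>+ z. ennreal (exp (y * f z)) \<partial>\<nu>)"
    by (simp add: nn_integral_add nn_integral_cmult)
  finally show ?thesis .
qed

lemma convex_on_enn2real_nn_integral_exp:
  assumes [measurable]: "f \<in> borel_measurable \<nu>" and "convex I"
    and fin: "\<And>s. s \<in> I \<Longrightarrow> (\<integral>\<^sup>+ z. ennreal (exp (s * f z)) \<partial>\<nu>) < \<infinity>"
  shows "convex_on I (\<lambda>s. enn2real (\<integral>\<^sup>+ z. ennreal (exp (s * f z)) \<partial>\<nu>))"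
proof (rule convex_onI[OF _ \<open>convex I\<close>])
  fix t x y :: real assume t: "0 < t" "t < 1" and xy: "x \<in> I" "y \<in> I"
  let ?H = "\<lambda>s. \<integral>\<^sup>+ z. ennreal (exp (s * f z)) \<partial>\<nu>"
  have "?H ((1 - t) * x + t * y) \<le> ennreal (1 - t) * ?H x + ennreal t * ?H y"
    using t by (intro nn_integral_exp_convex) simp_all
  moreover have "ennreal (1 - t) * ?H x + ennreal t * ?H y < top"
    using fin xy by (simp add: ennreal_mult_less_top)
  ultimately have "enn2real (?H ((1 - t) * x + t * y)) \<le> enn2real (ennreal (1 - t) * ?H x + ennreal t * ?H y)"
    by (rule enn2real_mono)
  also have "\<dots> = (1 - t) * enn2real (?H x) + t * enn2real (?H y)"
    using fin xy t by (simp add: enn2real_plus enn2real_mult ennreal_mult_less_top)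
  finally show "enn2real (?H ((1 - t) *\<^sub>R x + t *\<^sub>R y)) \<le> (1 - t) * enn2real (?H x) + t * enn2real (?H y)"
    by simp
qed

lemma nef_density_gt_iff:
  assumes "S \<in> borel_measurable \<nu>" and "t > 0"
    and Z: "(\<integral>\<^sup>+ z. ennreal (exp (s * S z)) \<partial>\<nu>) \<noteq> 0" "(\<integral>\<^sup>+ z. ennreal (exp (s * S z)) \<partial>\<nu>) < \<infinity>"
  shows "t < nef_density \<nu> S s y \<longleftrightarrow> enn2real (\<integral>\<^sup>+ z. ennreal (exp (s * (S z - S y))) \<partial>\<nu>) < 1 / t"
proof -
  define Z where "Z = enn2real (\<integral>\<^sup>+ z. ennreal (exp (s * S z)) \<partial>\<nu>)"
  have "Z > 0" using Z by (simp add: Z_def enn2real_positive_iff zero_less_iff_neq_zero)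
  have H: "enn2real (\<integral>\<^sup>+ z. ennreal (exp (s * (S z - S y))) \<partial>\<nu>) = Z / exp (s * S y)"
    using assms(1) by (simp add: nn_integral_exp_shift enn2real_mult Z_def exp_minus divide_inverse)
  have q: "nef_density \<nu> S s y = exp (s * S y) / Z"
    using \<open>Z > 0\<close> by (simp add: nef_density_def logpart_def Z_def exp_diff mult.commute)
  show ?thesis unfolding H q using \<open>Z > 0\<close> \<open>t > 0\<close> by (simp add: field_simps)
qed

lemma nn_integral_exp_neq_zero:
  assumes [measurable]: "S \<in> borel_measurable \<nu>" and "\<not> (\<exists>c. AE y in \<nu>. S y = c)"
  shows "(\<integral>\<^sup>+ z. ennreal (exp (s * S z)) \<partial>\<nu>) \<noteq> 0"
proof
  assume "(\<integral>\<^sup>+ z. ennreal (exp (s * S z)) \<partial>\<nu>) = 0"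
  then have "AE z in \<nu>. ennreal (exp (s * S z)) = 0" by (simp add: nn_integral_0_iff_AE)
  then have "AE z in \<nu>. S z = 0" by (rule eventually_mono) simp
  then show False using assms(2) by blast
qed

theorem is_interval_nef_density_superlevel:
  assumes "S \<in> borel_measurable \<nu>" "\<not> (\<exists>c. AE y in \<nu>. S y = c)" "is_interval I"
    and fin: "\<forall>\<theta>\<in>I. (\<integral>\<^sup>+ y. ennreal (exp (\<theta> * S y)) \<partial>\<nu>) < \<infinity>"
  shows "is_interval {s\<in>I. t < nef_density \<nu> S s y}"
proof (cases "t > 0")
  case False
  have "0 < nef_density \<nu> S s y" for s by (simp add: nef_density_def)
  then have "{s\<in>I. t < nef_density \<nu> S s y} = I" using False by (auto simp: not_less intro: le_less_trans)
  then show ?thesis using assms(3) by simp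
next
  case True
  let ?H = "\<lambda>s. enn2real (\<integral>\<^sup>+ z. ennreal (exp (s * (S z - S y))) \<partial>\<nu>)"
  have "(\<integral>\<^sup>+ z. ennreal (exp (s * (S z - S y))) \<partial>\<nu>) < \<infinity>" if "s \<in> I" for s
    using fin that assms(1) by (simp add: nn_integral_exp_shift ennreal_mult_less_top)
  then have "convex_on I ?H"
    using assms(1,3) by (intro convex_on_enn2real_nn_integral_exp) (simp_all add: is_interval_convex_1)
  moreover have "{s\<in>I. t < nef_density \<nu> S s y} = {s\<in>I. ?H s < 1 / t}"
    using nef_density_gt_iff[OF assms(1) True nn_integral_exp_neq_zero[OF assms(1,2)]] fin by auto
  ultimately show ?thesis by (simp add: is_interval_convex_1 convex_strict_sublevel)
qed

theorem proposition6:
  fixes \<nu> :: "'y measure" and S :: "'y \<Rightarrow> real" and I :: "real set"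
    and W :: "'w set" and \<Theta> :: "('w \<Rightarrow> real) set" and V :: nat
  assumes "sigma_finite_measure \<nu>"
    and "S \<in> borel_measurable \<nu>"
    and "\<not> (\<exists>c. AE y in \<nu>. S y = c)"
    and "is_interval I" and "interior I \<noteq> {}"
    and "\<forall>\<theta>\<in>I. (\<integral>\<^sup>+ y. ennreal (exp (\<theta> * S y)) \<partial>\<nu>) < \<infinity>"
    and "\<forall>\<theta>\<in>\<Theta>. \<forall>w\<in>W. \<theta> w \<in> I"
    and "vc_subgraph_le W \<Theta> (real V)"
    and "V \<ge> 1"
  shows "vc_subgraph_le (W \<times> space \<nu>)
           ((\<lambda>\<theta>. \<lambda>(w, y). nef_density \<nu> S (\<theta> w) y) ` \<Theta>) (9.41 * real V)"
proof -
  have "card C \<le> 9 * V"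
    if C: "C \<subseteq> (W \<times> space \<nu>) \<times> UNIV" "finite C"
      "subgraphs_shatter (W \<times> space \<nu>) ((\<lambda>\<theta>. \<lambda>(w, y). nef_density \<nu> S (\<theta> w) y) ` \<Theta>) C" for C
  proof -
    have "2 ^ card C \<le> (\<Sum>k\<le>V. (2 * card C) choose k)"
    proof (rule two_power_card_le_sum_binomial[OF assms(8) C(2), where w = "\<lambda>c. fst (fst c)"
          and J = "\<lambda>c. {s\<in>I. snd c < nef_density \<nu> S s (snd (fst c))}"])
      show "(\<lambda>c. fst (fst c)) ` C \<subseteq> W" using C(1) by auto
      show "is_interval {s\<in>I. snd c < nef_density \<nu> S s (snd (fst c))}" for c
        using assms(2,3,4,6) by (rule is_interval_nef_density_superlevel)
    qed (rule subgraphs_shatter_composeD[OF C(3,1) assms(7)])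
    then show ?thesis using sum_binomial_double_less_two_power[OF assms(9), of "card C"] by linarith
  qed
  then have "vc_subgraph_le (W \<times> space \<nu>) ((\<lambda>\<theta>. \<lambda>(w, y). nef_density \<nu> S (\<theta> w) y) ` \<Theta>) (real (9 * V))"
    by (rule vc_subgraph_leI)
  then show ?thesis by (rule vc_subgraph_le_mono) simp
qed

end
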